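(* Let $m\ge0$, $n\ge1$, $r\ge n$, and let $f\in\mathbb{F}_q[x_1,\dots,x_r]$ satisfy $\delta_{n+1;m}(f)=0$. Then there exists $g\in\mathbb{F}_q[x_1,\dots,x_{r-1}]$ with $f=\delta_{n;m}(g)$.
   Context: $q$ is a power of a prime. Delta operators: for integers $b\ge0$, $c\ge0$, $1\le a\le c+1$, $\delta_{a;b}:\mathbb{F}_q(x_1,\dots,x_c)\to\mathbb{F}_q(x_1,\dots,x_{c+1})$ sends $f$ to $N/L(x_1,\dots,x_a)$, where $N$ is the $a\times a$ determinant whose $t$-th row is $(x_1^{q^{t-1}},\dots,x_a^{q^{t-1}})$ for $t=1,\dots,a-1$ and whose last row is $(x_1^{q^b}f(\hat x_1),\dots,x_a^{q^b}f(\hat x_a))$, with $f(\hat x_i)=f(x_1,\dots,x_{i-1},x_{i+1},\dots,x_{c+1})$, and $L(x_1,\dots,x_a)=\det(x_j^{q^{t-1}})_{1\le t,j\le a}$. Here $\delta_{n+1;m}$ is applied with $c=r$ and $\delta_{n;m}$ with $c=r-1$. *)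

theory Defs
  imports "HOL-Library.Poly_Mapping" "Jordan_Normal_Form.Determinant"
begin

text \<open>Variable x_(j+1) of the paper is the variable with index j here (0-based).\<close>

type_synonym 'a mpol = "(nat \<Rightarrow>\<^sub>0 nat) \<Rightarrow>\<^sub>0 'a"

definition const_mp :: "'a::zero \<Rightarrow> 'a mpol" where
  "const_mp c = Poly_Mapping.single 0 c"

definition Var :: "nat \<Rightarrow> 'a::{zero,one} mpol" where
  "Var j = Poly_Mapping.single (Poly_Mapping.single j 1) 1"

definition vars_mp :: "'a::zero mpol \<Rightarrow> nat set" where
  "vars_mp p = (\<Union>m \<in> Poly_Mapping.keys p. Poly_Mapping.keys m)"

definition subst_mp :: "(nat \<Rightarrow> 'a::comm_semiring_1 mpol) \<Rightarrow> 'a mpol \<Rightarrow> 'a mpol" where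
  "subst_mp s p = (\<Sum>m \<in> Poly_Mapping.keys p. const_mp (Poly_Mapping.lookup p m) * (\<Prod>v \<in> Poly_Mapping.keys m. s v ^ Poly_Mapping.lookup m v))"

text \<open>f(hat x_i): the variables of f are sent to x_1,...,x_(i-1),x_(i+1),...
  In 0-based indexing, omitting variable i: variable v goes to v if v < i, else v+1.\<close>
definition hat_mp :: "nat \<Rightarrow> 'a::comm_semiring_1 mpol \<Rightarrow> 'a mpol" where
  "hat_mp i f = subst_mp (\<lambda>v. Var (if v < i then v else Suc v)) f"

definition L_mat :: "nat \<Rightarrow> nat \<Rightarrow> 'a::comm_ring_1 mpol mat" where
  "L_mat q a = mat a a (\<lambda>(t, j). Var j ^ (q ^ t))"

definition N_mat :: "nat \<Rightarrow> nat \<Rightarrow> nat \<Rightarrow> 'a::comm_ring_1 mpol \<Rightarrow> 'a mpol mat" where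
  "N_mat q a b f = mat a a (\<lambda>(t, j).
      if t < a - 1 then Var j ^ (q ^ t) else Var j ^ (q ^ b) * hat_mp j f)"

text \<open>Over F_q with q = CARD('a), delta_(a;b)(f) = det (N_mat q a b f) / det (L_mat q a).\<close>

end

theory Submission
  imports Defs "HOL-Computational_Algebra.Polynomial"
begin

text \<open>Substituting \<open>x\<^bsub>n+1\<^esub> := 1\<close> into the vanishing numerator of
  \<open>\<delta>\<^bsub>n+1;m\<^esub>(f)\<close> gives a determinant whose last column is \<open>(1, \<dots>, 1, f)\<close>; expanding
  along it expresses \<open>f L(x\<^sub>1, \<dots>, x\<^sub>n)\<close> as a signed sum of minors. Each minor looks like
  the numerator of \<open>\<delta>\<^bsub>n;m\<^esub>(h)\<close>, \<open>h = f|\<^bsub>x\<^sub>n = 1\<^esub>\<close>, except that one Frobenius exponent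
  \<open>q^t\<close>, \<open>t < n\<close>, of its Moore rows is replaced by \<open>q^(n-1)\<close>. Dickson's relation
  \<open>x^(q^(n-1)) = -\<Sum>\<^bsub>k<n-1\<^esub> c\<^sub>k x^(q^k)\<close>, valid for all \<open>x\<close> in the span of
  \<open>x\<^sub>1, \<dots>, x\<^bsub>n-1\<^esub>\<close> with coefficients \<open>c\<^sub>k\<close> in those variables, turns every such
  generalised Moore determinant into a multiple \<open>D\<^sub>t L(x\<^sub>1, \<dots>, x\<^bsub>n-1\<^esub>)\<close>. Hence the
  minor is the numerator of \<open>\<delta>\<^bsub>n;m\<^esub>(h D\<^sub>t)\<close>, and linearity of \<open>\<delta>\<^bsub>n;m\<^esub>\<close> gives
  \<open>f = \<delta>\<^bsub>n;m\<^esub>(\<Sum>\<^sub>t \<plusminus>h D\<^sub>t)\<close>.\<close>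

section \<open>Substitution and variables\<close>

lemma const_mp_0 [simp]: "const_mp 0 = 0"
  by (simp add: const_mp_def)

lemma const_mp_add: "const_mp (a + b) = const_mp a + const_mp b"
  by (simp add: const_mp_def single_add)

lemma const_mp_mult: "const_mp (a * b) = const_mp a * const_mp b"
  by (simp add: const_mp_def mult_single)

lemma poly_mapping_eq_sum_single:
  "p = (\<Sum>m \<in> Poly_Mapping.keys p. Poly_Mapping.single m (Poly_Mapping.lookup p m))"
  by (rule poly_mapping_eqI) (auto simp: lookup_sum lookup_single when_def in_keys_iff)

definition subst_monom :: "(nat \<Rightarrow> 'a::comm_semiring_1 mpol) \<Rightarrow> (nat \<Rightarrow>\<^sub>0 nat) \<Rightarrow> 'a mpol" where
  "subst_monom s m = (\<Prod>v \<in> Poly_Mapping.keys m. s v ^ Poly_Mapping.lookup m v)"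

lemma subst_mp_eq_sum_monoms:
  "subst_mp s p = (\<Sum>m \<in> Poly_Mapping.keys p. const_mp (Poly_Mapping.lookup p m) * subst_monom s m)"
  unfolding subst_mp_def subst_monom_def ..

lemma subst_monom_superset:
  assumes "finite K" "Poly_Mapping.keys m \<subseteq> K"
  shows "subst_monom s m = (\<Prod>v \<in> K. s v ^ Poly_Mapping.lookup m v)"
  unfolding subst_monom_def
  by (rule prod.mono_neutral_left) (use assms in \<open>auto simp: in_keys_iff\<close>)

lemma subst_monom_add: "subst_monom s (a + b) = subst_monom s a * subst_monom s b"
proof -
  let ?K = "Poly_Mapping.keys a \<union> Poly_Mapping.keys b"
  have "subst_monom s (a + b) = (\<Prod>v \<in> ?K. s v ^ Poly_Mapping.lookup (a + b) v)"
    by (rule subst_monom_superset) (auto simp: keys_add)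
  also have "\<dots> = (\<Prod>v \<in> ?K. s v ^ Poly_Mapping.lookup a v) * (\<Prod>v \<in> ?K. s v ^ Poly_Mapping.lookup b v)"
    by (simp add: lookup_add power_add prod.distrib)
  also have "\<dots> = subst_monom s a * subst_monom s b"
    by (subst (1 2) subst_monom_superset[of ?K]) auto
  finally show ?thesis .
qed

lemma subst_mp_add: "subst_mp s (p + q) = subst_mp s p + subst_mp s q"
  unfolding subst_mp_eq_sum_monoms
  by (rule setsum_keys_plus_distrib) (simp_all add: const_mp_add distrib_right)

lemma subst_mp_single: "subst_mp s (Poly_Mapping.single m c) = const_mp c * subst_monom s m"
  by (cases "c = 0") (auto simp: subst_mp_eq_sum_monoms)

lemma subst_mp_0 [simp]: "subst_mp s 0 = 0"
  by (simp add: subst_mp_def)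

lemma subst_mp_1 [simp]: "subst_mp s 1 = 1"
  by (simp add: subst_mp_def const_mp_def)

lemma subst_mp_sum: "subst_mp s (sum f A) = (\<Sum>a\<in>A. subst_mp s (f a))"
  by (induction A rule: infinite_finite_induct) (auto simp: subst_mp_add)

lemma subst_mp_mult: "subst_mp s (p * q) = subst_mp s p * subst_mp s q"
proof -
  let ?P = "Poly_Mapping.keys p" and ?Q = "Poly_Mapping.keys q"
  have "p * q = (\<Sum>a \<in> ?P. Poly_Mapping.single a (Poly_Mapping.lookup p a)) *
      (\<Sum>b \<in> ?Q. Poly_Mapping.single b (Poly_Mapping.lookup q b))"
    by (subst (1 2) poly_mapping_eq_sum_single) (rule refl)
  also have "\<dots> = (\<Sum>a \<in> ?P. \<Sum>b \<in> ?Q.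
      Poly_Mapping.single (a + b) (Poly_Mapping.lookup p a * Poly_Mapping.lookup q b))"
    by (simp add: sum_distrib_left sum_distrib_right mult_single sum.swap[of _ ?Q])
  finally have "subst_mp s (p * q) = (\<Sum>a \<in> ?P. \<Sum>b \<in> ?Q.
      const_mp (Poly_Mapping.lookup p a) * subst_monom s a *
      (const_mp (Poly_Mapping.lookup q b) * subst_monom s b))"
    by (simp add: subst_mp_sum subst_mp_single const_mp_mult subst_monom_add mult_ac)
  also have "\<dots> = subst_mp s p * subst_mp s q"
    by (simp add: subst_mp_eq_sum_monoms sum_distrib_left sum_distrib_right sum.swap[of _ ?Q])
  finally show ?thesis .
qed

lemma comm_semiring_hom_subst_mp: "comm_semiring_hom (subst_mp s)"
  by unfold_locales (simp_all add: subst_mp_add subst_mp_mult)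

lemma comm_ring_hom_subst_mp: "comm_ring_hom (subst_mp (s :: nat \<Rightarrow> 'a::comm_ring_1 mpol))"
  by unfold_locales (simp_all add: subst_mp_add subst_mp_mult)

lemma subst_mp_Var [simp]: "subst_mp s (Var v) = s v"
  by (simp add: Var_def subst_mp_single subst_monom_def const_mp_def)

lemma subst_mp_const [simp]: "subst_mp s (const_mp c) = const_mp c"
  by (simp add: const_mp_def subst_mp_single subst_monom_def)

lemma Var_power: "Var v ^ k = Poly_Mapping.single (Poly_Mapping.single v k) 1"
proof (induction k)
  case (Suc k)
  then show ?case
    by (simp add: Var_def mult_single flip: single_add)
qed simp

lemma subst_monom_Var: "subst_monom Var m = Poly_Mapping.single m 1"
proof -
  have "subst_monom Var m = (\<Prod>v \<in> Poly_Mapping.keys m.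
      Poly_Mapping.single (Poly_Mapping.single v (Poly_Mapping.lookup m v)) 1)"
    by (simp add: subst_monom_def Var_power)
  also have "\<dots> = Poly_Mapping.single (\<Sum>v \<in> Poly_Mapping.keys m. Poly_Mapping.single v (Poly_Mapping.lookup m v)) 1"
    by (induction rule: finite_induct[OF finite_keys]) (simp_all add: mult_single)
  also have "\<dots> = Poly_Mapping.single m 1"
    by (simp flip: poly_mapping_eq_sum_single)
  finally show ?thesis .
qed

lemma subst_mp_Var_id [simp]: "subst_mp Var p = p"
  by (subst (2) poly_mapping_eq_sum_single)
     (simp add: subst_mp_eq_sum_monoms subst_monom_Var const_mp_def mult_single)

lemma subst_mp_subst_mp: "subst_mp s (subst_mp t p) = subst_mp (\<lambda>v. subst_mp s (t v)) p"
proof -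
  interpret comm_semiring_hom "subst_mp s" by (rule comm_semiring_hom_subst_mp)
  show ?thesis
    unfolding subst_mp_eq_sum_monoms[of _ p] subst_monom_def
    by (simp add: hom_sum hom_mult hom_prod hom_power)
qed

lemma vars_mp_add: "vars_mp (p + q) \<subseteq> vars_mp p \<union> vars_mp q"
  unfolding vars_mp_def using keys_add[of p q] by blast

lemma vars_mp_mult: "vars_mp (p * q :: 'a::comm_semiring_1 mpol) \<subseteq> vars_mp p \<union> vars_mp q"
proof
  fix v assume "v \<in> vars_mp (p * q)"
  then obtain m where m: "m \<in> Poly_Mapping.keys (p * q)" "v \<in> Poly_Mapping.keys m"
    unfolding vars_mp_def by blast
  then obtain a b where "m = a + b" "a \<in> Poly_Mapping.keys p" "b \<in> Poly_Mapping.keys q"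
    using keys_mult[of p q] by blast
  with m(2) show "v \<in> vars_mp p \<union> vars_mp q"
    unfolding vars_mp_def using keys_add[of a b] by blast
qed

lemma vars_mp_uminus [simp]: "vars_mp (- p :: 'a::ab_group_add mpol) = vars_mp p"
  by (simp add: vars_mp_def in_keys_iff)

lemma vars_mp_diff: "vars_mp (p - q :: 'a::ab_group_add mpol) \<subseteq> vars_mp p \<union> vars_mp q"
  using vars_mp_add[of p "- q"] by simp

lemma vars_mp_const [simp]: "vars_mp (const_mp c) = {}"
  by (simp add: vars_mp_def const_mp_def)

lemma vars_mp_0 [simp]: "vars_mp 0 = {}"
  by (simp add: vars_mp_def)

lemma vars_mp_1 [simp]: "vars_mp 1 = {}"
  by (simp add: vars_mp_def)

lemma vars_mp_of_int [simp]: "vars_mp (of_int k) = {}"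
  by (metis single_of_int const_mp_def vars_mp_const)

lemma vars_mp_Var [simp]: "vars_mp (Var v :: 'a::zero_neq_one mpol) = {v}"
  by (simp add: vars_mp_def Var_def)

lemma vars_mp_sum_subset:
  "(\<And>a. a \<in> A \<Longrightarrow> vars_mp (f a) \<subseteq> V) \<Longrightarrow> vars_mp (sum f A) \<subseteq> V"
  by (induction A rule: infinite_finite_induct) (auto dest!: subsetD[OF vars_mp_add])

lemma vars_mp_prod_subset:
  "(\<And>a. a \<in> A \<Longrightarrow> vars_mp (f a) \<subseteq> V) \<Longrightarrow> vars_mp (prod f A :: 'a::comm_semiring_1 mpol) \<subseteq> V"
  by (induction A rule: infinite_finite_induct) (auto dest!: subsetD[OF vars_mp_mult])

lemma vars_mp_power_subset:
  "vars_mp p \<subseteq> V \<Longrightarrow> vars_mp (p ^ k :: 'a::comm_semiring_1 mpol) \<subseteq> V"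
  using vars_mp_prod_subset[of "{..<k}" "\<lambda>_. p" V] by simp

lemma vars_mp_subst_mp: "vars_mp (subst_mp s p) \<subseteq> (\<Union>v \<in> vars_mp p. vars_mp (s v))"
  unfolding subst_mp_def
proof (intro vars_mp_sum_subset order.trans[OF vars_mp_mult] Un_least vars_mp_prod_subset vars_mp_power_subset)
  fix m v assume "m \<in> Poly_Mapping.keys p" "v \<in> Poly_Mapping.keys m"
  then show "vars_mp (s v) \<subseteq> (\<Union>v \<in> vars_mp p. vars_mp (s v))"
    unfolding vars_mp_def by blast
qed simp

lemma vars_mp_det_subset:
  assumes "\<And>i j. i < dim_row A \<Longrightarrow> j < dim_col A \<Longrightarrow> vars_mp (A $$ (i, j)) \<subseteq> V"
  shows "vars_mp (det (A :: 'a::comm_ring_1 mpol mat)) \<subseteq> V"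
proof -
  have "vars_mp (of_int (sign \<pi>) * (\<Prod>i = 0..<dim_row A. A $$ (i, \<pi> i))) \<subseteq> V"
    if "\<pi> permutes {0..<dim_row A}" "dim_row A = dim_col A" for \<pi>
    using that by (intro order.trans[OF vars_mp_mult] Un_least vars_mp_prod_subset assms)
      (auto simp: permutes_def)
  then show ?thesis
    unfolding det_def by (auto intro!: vars_mp_sum_subset)
qed

section \<open>Frobenius over a finite field\<close>

lemma finite_field_power_card: "(x :: 'a::{field,finite}) ^ card (UNIV :: 'a set) = x"
proof (cases "x = 0")
  case True
  then show ?thesis by (simp add: finite_UNIV_card_ge_0)
next
  case False
  let ?U = "UNIV - {0 :: 'a}"
  have "bij_betw ((*) x) ?U ?U"
    by (rule bij_betw_byWitness[where f' = "\<lambda>y. y / x"]) (use False in auto)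
  then have "(\<Prod>y\<in>?U. y) = (\<Prod>y\<in>?U. x * y)"
    using prod.reindex_bij_betw[of "(*) x" ?U ?U "\<lambda>y. y"] by simp
  also have "\<dots> = x ^ card ?U * (\<Prod>y\<in>?U. y)"
    by (simp add: prod.distrib)
  finally have "x ^ card ?U = 1"
    using prod_zero_iff[of ?U "\<lambda>y. y"] by (simp del: prod_zero_iff)
  moreover have "card (UNIV :: 'a set) = Suc (card ?U)"
    using finite_UNIV_card_ge_0[where 'a = 'a] by (simp add: card_Diff_singleton)
  ultimately show ?thesis
    by (metis mult_1_left power_Suc2)
qed

text \<open>The polynomial \<open>(X + 1)^q - X^q - 1\<close> has degree below \<open>q\<close> and vanishes on all
  \<open>q\<close> field elements, hence it is zero; its coefficients are the binomials \<open>q choose k\<close>.\<close>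
lemma finite_field_card_choose_eq_0:
  assumes "0 < k" "k < card (UNIV :: 'a::{field,finite} set)"
  shows "(of_nat (card (UNIV :: 'a set) choose k) :: 'a) = 0"
proof -
  let ?q = "card (UNIV :: 'a set)"
  define D :: "'a poly" where "D = [:1, 1:] ^ ?q - monom 1 ?q - 1"
  have coeff_D: "coeff D i = (if i \<le> ?q then of_nat (?q choose i) else 0)
      - (if i = ?q then 1 else 0) - (if i = 0 then 1 else 0)" for i
  proof (cases "i \<le> ?q")
    case True
    then show ?thesis
      by (simp add: D_def coeff_linear_poly_power)
  next
    case False
    then have "coeff ([:1, 1:] ^ ?q) i = 0"
      by (intro coeff_eq_0) (simp add: degree_linear_power)
    with False show ?thesis
      by (simp add: D_def)
  qed
  have "D = 0"
  proof (rule ccontr)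
    assume "D \<noteq> 0"
    then have "card {x. poly D x = 0} \<le> degree D"
      by (rule card_poly_roots_bound)
    moreover have "degree D < ?q"
      using finite_UNIV_card_ge_0[where 'a = 'a] 
      by (intro le_less_trans[OF degree_le[of "?q - 1"]]) (auto simp: coeff_D)
    moreover have "{x. poly D x = 0} = UNIV"
      by (auto simp: D_def poly_monom finite_field_power_card)
    ultimately show False
      by simp
  qed
  then show ?thesis
    using coeff_D[of k] assms by simp
qed

lemma add_power_eq_if_choose_vanish:
  fixes x y :: "'b::comm_semiring_1"
  assumes "n > 0" and "\<And>k. 0 < k \<Longrightarrow> k < n \<Longrightarrow> of_nat (n choose k) = (0::'b)"
  shows "(x + y) ^ n = x ^ n + y ^ n"
proof -
  have "(x + y) ^ n = (\<Sum>k\<le>n. of_nat (n choose k) * x ^ k * y ^ (n - k))"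
    by (rule binomial_ring)
  also have "\<dots> = (\<Sum>k\<in>{0, n}. of_nat (n choose k) * x ^ k * y ^ (n - k))"
    by (rule sum.mono_neutral_right) (auto simp: assms(2))
  finally show ?thesis
    using assms(1) by (simp add: add.commute)
qed

lemma mpol_sum_power_card:
  fixes f :: "'b \<Rightarrow> 'a::{field,finite} mpol"
  shows "sum f A ^ card (UNIV :: 'a set) = (\<Sum>i\<in>A. f i ^ card (UNIV :: 'a set))"
proof (induction A rule: infinite_finite_induct)
  case (insert i A)
  have "of_nat (card (UNIV :: 'a set) choose k) = (0 :: 'a mpol)"
    if "0 < k" "k < card (UNIV :: 'a set)" for k
    by (metis finite_field_card_choose_eq_0[OF that] single_of_nat single_zero)
  with insert show ?case
    by (simp add: add_power_eq_if_choose_vanish finite_UNIV_card_ge_0)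
qed (simp_all add: finite_UNIV_card_ge_0)

section \<open>Subspace polynomials\<close>

text \<open>\<open>subspace_poly q i T = (\<Sum>l\<le>i. subspace_coeff q i l * T ^ q ^ l)\<close> is the subspace
  polynomial \<open>P\<^sub>i(T)\<close> of the \<open>\<bbbF>\<^sub>q\<close>-span of \<open>x\<^sub>0, \<dots>, x\<^bsub>i-1\<^esub>\<close>, given through the
  recursion \<open>P\<^bsub>i+1\<^esub>(T) = P\<^sub>i(T)^q - P\<^sub>i(x\<^sub>i)^(q-1) P\<^sub>i(T)\<close> transcribed on coefficients.\<close>
primrec subspace_coeff :: "nat \<Rightarrow> nat \<Rightarrow> nat \<Rightarrow> 'a::comm_ring_1 mpol" where
  "subspace_coeff q 0 = (\<lambda>k. if k = 0 then 1 else 0)"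
| "subspace_coeff q (Suc i) =
    (let c = subspace_coeff q i; w = (\<Sum>l\<le>i. c l * Var i ^ q ^ l) ^ (q - 1)
     in (\<lambda>k. (if k = 0 then 0 else c (k - 1) ^ q) - w * c k))"

definition subspace_poly :: "nat \<Rightarrow> nat \<Rightarrow> 'a::comm_ring_1 mpol \<Rightarrow> 'a mpol" where
  "subspace_poly q i T = (\<Sum>l\<le>i. subspace_coeff q i l * T ^ q ^ l)"

lemma subspace_coeff_Suc:
  "subspace_coeff q (Suc i) k = (if k = 0 then 0 else subspace_coeff q i (k - 1) ^ q)
     - subspace_poly q i (Var i) ^ (q - 1) * subspace_coeff q i k"
  by (simp add: subspace_poly_def Let_def)

declare subspace_coeff.simps(2) [simp del]

lemma subspace_coeff_eq_0: "q > 0 \<Longrightarrow> i < k \<Longrightarrow> subspace_coeff q i k = 0"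
  by (induction i arbitrary: k) (simp_all add: subspace_coeff_Suc power_0_left)

lemma subspace_coeff_self: "q > 0 \<Longrightarrow> subspace_coeff q i i = 1"
  by (induction i) (simp_all add: subspace_coeff_Suc subspace_coeff_eq_0)

lemma vars_mp_subspace_coeff: "vars_mp (subspace_coeff q i k :: 'a::comm_ring_1 mpol) \<subseteq> {..<i}"
proof (induction i arbitrary: k)
  case (Suc i)
  have "vars_mp (subspace_poly q i (Var i) :: 'a mpol) \<subseteq> {..<Suc i}"
    unfolding subspace_poly_def using Suc.IH
    by (intro vars_mp_sum_subset order.trans[OF vars_mp_mult] Un_least vars_mp_power_subset) force+
  moreover have c: "vars_mp (subspace_coeff q i k' :: 'a mpol) \<subseteq> {..<Suc i}" for k'
    using Suc.IH[of k'] by auto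
  moreover have "vars_mp (if k = 0 then 0 else subspace_coeff q i (k - 1) ^ q :: 'a mpol) \<subseteq> {..<Suc i}"
    using vars_mp_power_subset[OF c] by simp
  ultimately show ?case
    unfolding subspace_coeff_Suc
    by (meson vars_mp_diff vars_mp_mult vars_mp_power_subset Un_least order_trans)
qed simp

lemma subspace_poly_Suc:
  fixes T :: "'a::{field,finite} mpol"
  defines "q \<equiv> card (UNIV :: 'a set)"
  shows "subspace_poly q (Suc i) T
    = subspace_poly q i T ^ q - subspace_poly q i (Var i) ^ (q - 1) * subspace_poly q i T"
proof -
  have q: "q > 0"
    by (simp add: q_def finite_UNIV_card_ge_0)
  let ?c = "subspace_coeff q i" and ?w = "subspace_poly q i (Var i) ^ (q - 1)"
  have "subspace_poly q (Suc i) T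
      = (\<Sum>l\<le>Suc i. (if l = 0 then 0 else ?c (l - 1) ^ q) * T ^ q ^ l)
        - ?w * (\<Sum>l\<le>Suc i. ?c l * T ^ q ^ l)"
    unfolding subspace_poly_def[of q "Suc i"] subspace_coeff_Suc
    by (simp only: left_diff_distrib sum_subtractf sum_distrib_left mult.assoc)
  also have "(\<Sum>l\<le>Suc i. (if l = 0 then 0 else ?c (l - 1) ^ q) * T ^ q ^ l)
      = (\<Sum>l\<le>i. (?c l * T ^ q ^ l) ^ q)"
    by (subst sum.atMost_Suc_shift) (simp add: power_mult_distrib power_mult[symmetric] mult.commute)
  also have "\<dots> = subspace_poly q i T ^ q"
    unfolding subspace_poly_def q_def by (rule mpol_sum_power_card[symmetric])
  also have "(\<Sum>l\<le>Suc i. ?c l * T ^ q ^ l) = subspace_poly q i T"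
    by (simp add: subspace_poly_def subspace_coeff_eq_0[OF q])
  finally show ?thesis .
qed

lemma subspace_poly_Var_eq_0:
  defines "q \<equiv> card (UNIV :: 'a::{field,finite} set)"
  assumes "j < i"
  shows "subspace_poly q i (Var j :: 'a mpol) = 0"
  using assms(2)
proof (induction i)
  case (Suc i)
  have q: "0 < q"
    by (simp add: q_def finite_UNIV_card_ge_0)
  have step: "subspace_poly q (Suc i) (Var j :: 'a mpol)
      = subspace_poly q i (Var j) ^ q - subspace_poly q i (Var i) ^ (q - 1) * subspace_poly q i (Var j)"
    unfolding q_def by (rule subspace_poly_Suc)
  show ?case
  proof (cases "j = i")
    case True
    have "p ^ q = p ^ (q - 1) * p" for p :: "'a mpol"
      using q by (simp flip: power_Suc2)
    with True step show ?thesis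
      by (simp only: mult.commute diff_self)
  next
    case False
    with Suc have "subspace_poly q i (Var j :: 'a mpol) = 0"
      by simp
    with q step show ?thesis
      by simp
  qed
qed simp

lemma Var_power_q_power_eq:
  defines "q \<equiv> card (UNIV :: 'a::{field,finite} set)"
  assumes "j < N"
  shows "(Var j :: 'a mpol) ^ q ^ N = - (\<Sum>k<N. subspace_coeff q N k * Var j ^ q ^ k)"
proof -
  have "0 = subspace_poly q N (Var j :: 'a mpol)"
    using subspace_poly_Var_eq_0[OF assms(2)] by (simp add: q_def)
  also have "\<dots> = (\<Sum>k<N. subspace_coeff q N k * Var j ^ q ^ k) + Var j ^ q ^ N"
    by (simp add: subspace_poly_def lessThan_Suc_atMost[symmetric] subspace_coeff_self
        q_def finite_UNIV_card_ge_0)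
  finally show ?thesis
    by (simp add: eq_neg_iff_add_eq_0 add.commute)
qed

section \<open>Generalised Moore determinants\<close>

lemma comm_ring_hom_hat_mp: "comm_ring_hom (hat_mp j :: 'a::comm_ring_1 mpol \<Rightarrow> 'a mpol)"
  unfolding hat_mp_def[abs_def] by (rule comm_ring_hom_subst_mp)

lemma hat_mp_Var: "hat_mp j (Var v) = Var (if v < j then v else Suc v)"
  by (simp add: hat_mp_def)

definition moore_mat :: "nat \<Rightarrow> nat \<Rightarrow> (nat \<Rightarrow> nat) \<Rightarrow> 'a::comm_ring_1 mpol mat" where
  "moore_mat q N e = mat N N (\<lambda>(i, j). Var j ^ q ^ e i)"

lemma L_mat_eq_moore_mat: "L_mat q N = moore_mat q N id"
  by (simp add: L_mat_def moore_mat_def)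

lemma det_moore_mat_factor:
  defines "q \<equiv> card (UNIV :: 'a::{field,finite} set)"
  assumes e: "\<And>i. i < N \<Longrightarrow> e i \<le> N"
  shows "\<exists>D. vars_mp D \<subseteq> {..<N} \<and> det (moore_mat q N e :: 'a mpol mat) = D * det (L_mat q N)"
proof -
  text \<open>Row \<open>i\<close> of \<open>R\<close> expresses row \<open>i\<close> of the Moore matrix through the rows of \<open>L\<close>.\<close>
  define R :: "'a mpol mat" where
    "R = mat N N (\<lambda>(i, k). if e i < N then of_bool (k = e i) else - subspace_coeff q N k)"
  have "moore_mat q N e = R * L_mat q N"
  proof (rule eq_matI)
    fix i j assume "i < dim_row (R * L_mat q N)" "j < dim_col (R * L_mat q N)"
    then have i: "i < N" and j: "j < N"
      by (auto simp: R_def L_mat_def)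
    have "(R * L_mat q N) $$ (i, j) = (\<Sum>k<N. R $$ (i, k) * Var j ^ q ^ k)"
      using i j by (simp add: R_def L_mat_def scalar_prod_def atLeast0LessThan)
    also have "\<dots> = Var j ^ q ^ e i"
    proof (cases "e i < N")
      case True
      then show ?thesis
        using i by (simp add: R_def of_bool_def if_distrib[of "\<lambda>x. x * _"] cong: if_cong)
    next
      case False
      then have "e i = N"
        using e[OF i] by simp
      then show ?thesis
        using i Var_power_q_power_eq[OF j, where 'a = 'a]
        by (simp add: R_def q_def sum_negf)
    qed
    finally show "moore_mat q N e $$ (i, j) = (R * L_mat q N) $$ (i, j)"
      using i j by (simp add: moore_mat_def)
  qed (auto simp: moore_mat_def R_def L_mat_def)
  then have "det (moore_mat q N e) = det R * det (L_mat q N)"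
    by (simp add: det_mult[of _ N] R_def L_mat_def)
  moreover have "vars_mp (det R) \<subseteq> {..<N}"
    by (rule vars_mp_det_subset) (auto simp: R_def vars_mp_subspace_coeff)
  ultimately show ?thesis
    by blast
qed

lemma det_moore_last_row:
  fixes B :: "'a::comm_ring_1 mpol mat"
  assumes B: "B \<in> carrier_mat (Suc N) (Suc N)"
    and top: "\<And>i j. i < N \<Longrightarrow> j < Suc N \<Longrightarrow> B $$ (i, j) = Var j ^ q ^ e i"
    and bottom: "\<And>j. j < Suc N \<Longrightarrow> B $$ (N, j) = Var j ^ q ^ m * hat_mp j h"
  shows "det B = (\<Sum>j<Suc N. (-1) ^ (N + j) * Var j ^ q ^ m * hat_mp j (h * det (moore_mat q N e)))"
proof -
  have "det B = (\<Sum>j<Suc N. B $$ (N, j) * cofactor B N j)"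
    by (rule laplace_expansion_row[OF B]) simp
  also have "\<dots> = (\<Sum>j<Suc N. (-1) ^ (N + j) * Var j ^ q ^ m * hat_mp j (h * det (moore_mat q N e)))"
  proof (rule sum.cong[OF refl])
    fix j assume "j \<in> {..<Suc N}"
    then have j: "j < Suc N" by simp
    interpret comm_ring_hom "hat_mp j :: 'a mpol \<Rightarrow> 'a mpol"
      by (rule comm_ring_hom_hat_mp)
    have "mat_delete B N j = map_mat (hat_mp j) (moore_mat q N e)"
      using B j by (intro eq_matI) (auto simp: mat_delete_def moore_mat_def top hat_mp_Var hom_power)
    then show "B $$ (N, j) * cofactor B N j
        = (-1) ^ (N + j) * Var j ^ q ^ m * hat_mp j (h * det (moore_mat q N e))"
      by (simp add: cofactor_def bottom[OF j] hom_mult mult_ac)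
  qed
  finally show ?thesis .
qed

lemma det_N_mat_Suc:
  "det (N_mat q (Suc N) m h)
    = (\<Sum>j<Suc N. (-1) ^ (N + j) * Var j ^ q ^ m * hat_mp j (h * det (L_mat q N)))"
  unfolding L_mat_eq_moore_mat by (rule det_moore_last_row) (auto simp: N_mat_def)

lemma det_N_mat_sum:
  assumes "\<And>t j. hat_mp j (c t) = c t"
  shows "det (N_mat q (Suc N) m (\<Sum>t\<in>A. c t * h t))
    = (\<Sum>t\<in>A. c t * det (N_mat q (Suc N) m (h t :: 'a::comm_ring_1 mpol)))"
proof -
  let ?d = "det (L_mat q N)"
  have hat: "hat_mp j ((\<Sum>t\<in>A. c t * h t) * ?d) = (\<Sum>t\<in>A. c t * hat_mp j (h t * ?d))" for j
    using assms by (simp add: hat_mp_def subst_mp_sum subst_mp_mult sum_distrib_right mult.assoc)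
  have "det (N_mat q (Suc N) m (\<Sum>t\<in>A. c t * h t))
      = (\<Sum>j<Suc N. \<Sum>t\<in>A. c t * ((-1) ^ (N + j) * Var j ^ q ^ m * hat_mp j (h t * ?d)))"
    unfolding det_N_mat_Suc hat sum_distrib_left by (simp add: mult_ac)
  also have "\<dots> = (\<Sum>t\<in>A. c t * det (N_mat q (Suc N) m (h t)))"
    unfolding det_N_mat_Suc sum_distrib_left by (rule sum.swap)
  finally show ?thesis .
qed

lemma det_moore_last_row_eq_det_N_mat:
  fixes B :: "'a::{field,finite} mpol mat"
  defines "q \<equiv> card (UNIV :: 'a set)"
  assumes B: "B \<in> carrier_mat (Suc N) (Suc N)"
    and top: "\<And>i j. i < N \<Longrightarrow> j < Suc N \<Longrightarrow> B $$ (i, j) = Var j ^ q ^ e i"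
    and bottom: "\<And>j. j < Suc N \<Longrightarrow> B $$ (N, j) = Var j ^ q ^ m * hat_mp j h"
    and e: "\<And>i. i < N \<Longrightarrow> e i \<le> N"
  shows "\<exists>D. vars_mp D \<subseteq> {..<N} \<and> det B = det (N_mat q (Suc N) m (h * D))"
proof -
  obtain D where D: "vars_mp D \<subseteq> {..<N}" "det (moore_mat q N e :: 'a mpol mat) = D * det (L_mat q N)"
    using det_moore_mat_factor[where e = e and N = N, OF e] unfolding q_def by blast
  have "det B = (\<Sum>j<Suc N. (-1) ^ (N + j) * Var j ^ q ^ m * hat_mp j (h * det (moore_mat q N e)))"
    by (rule det_moore_last_row[OF B top bottom])
  also have "\<dots> = det (N_mat q (Suc N) m (h * D))"
    unfolding det_N_mat_Suc D(2) by (simp only: mult.assoc)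
  finally have "det B = det (N_mat q (Suc N) m (h * D))" .
  with D(1) show ?thesis
    by blast
qed

lemma hat_mp_neg_one_power [simp]: "hat_mp j ((-1) ^ k :: 'a::comm_ring_1 mpol) = (-1) ^ k"
proof -
  interpret comm_ring_hom "hat_mp j :: 'a mpol \<Rightarrow> 'a mpol"
    by (rule comm_ring_hom_hat_mp)
  show ?thesis
    by (simp add: hom_power hom_uminus)
qed

lemma det_bordered_moore_minor:
  fixes A :: "'a::{field,finite} mpol mat"
  defines "q \<equiv> card (UNIV :: 'a set)"
  assumes A: "A \<in> carrier_mat (Suc (Suc N)) (Suc (Suc N))" and t: "t < Suc N"
    and top: "\<And>t j. t < Suc N \<Longrightarrow> j < Suc N \<Longrightarrow> A $$ (t, j) = Var j ^ q ^ t"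
    and bottom: "\<And>j. j < Suc N \<Longrightarrow> A $$ (Suc N, j) = Var j ^ q ^ m * hat_mp j h"
  shows "\<exists>D. vars_mp D \<subseteq> {..<N} \<and>
    det (mat_delete A t (Suc N)) = det (N_mat q (Suc N) m (h * D))"
  unfolding q_def
proof (rule det_moore_last_row_eq_det_N_mat[where e = "\<lambda>i. if i < t then i else Suc i"])
  show "mat_delete A t (Suc N) \<in> carrier_mat (Suc N) (Suc N)"
    using A by (simp add: mat_delete_def)
  show "mat_delete A t (Suc N) $$ (i, j)
      = Var j ^ card (UNIV :: 'a set) ^ (if i < t then i else Suc i)"
    if "i < N" "j < Suc N" for i j
    using that t A by (auto simp: mat_delete_def top q_def)
  show "mat_delete A t (Suc N) $$ (N, j) = Var j ^ card (UNIV :: 'a set) ^ m * hat_mp j h"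
    if "j < Suc N" for j
    using that t A by (auto simp: mat_delete_def bottom q_def)
qed (use t in auto)

lemma det_bordered_moore:
  fixes A :: "'a::{field,finite} mpol mat"
  defines "q \<equiv> card (UNIV :: 'a set)"
  assumes A: "A \<in> carrier_mat (Suc n) (Suc n)" and "0 < n"
    and top: "\<And>t j. t < n \<Longrightarrow> j < n \<Longrightarrow> A $$ (t, j) = Var j ^ q ^ t"
    and top_last: "\<And>t. t < n \<Longrightarrow> A $$ (t, n) = 1"
    and bottom: "\<And>j. j < n \<Longrightarrow> A $$ (n, j) = Var j ^ q ^ m * hat_mp j h"
    and corner: "A $$ (n, n) = f"
  shows "\<exists>g. vars_mp g \<subseteq> vars_mp h \<union> {..<n - 1} \<and>
    f * det (L_mat q n) = det A + det (N_mat q n m g)"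
proof -
  obtain N where n: "n = Suc N"
    using \<open>0 < n\<close> by (cases n) auto
  have minor_corner: "mat_delete A n n = L_mat q n"
    using A by (intro eq_matI) (auto simp: mat_delete_def L_mat_def top)
  obtain D where D: "\<And>t. t < n \<Longrightarrow> vars_mp (D t) \<subseteq> {..<N}"
    "\<And>t. t < n \<Longrightarrow> det (mat_delete A t n) = det (N_mat q n m (h * D t))"
    using det_bordered_moore_minor[of A N _ m h, folded q_def] A top bottom
    unfolding n by metis
  define g where "g = (\<Sum>t<n. (-1) ^ (t + N) * (h * D t))"
  have "det A = (\<Sum>t<Suc n. A $$ (t, n) * cofactor A t n)"
    by (rule laplace_expansion_column[OF A]) simp
  also have "\<dots> = (\<Sum>t<n. (-1) ^ (t + n) * det (N_mat q n m (h * D t))) + f * det (L_mat q n)"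
    by (simp add: top_last corner minor_corner cofactor_def D(2))
  also have "(\<Sum>t<n. (-1) ^ (t + n) * det (N_mat q n m (h * D t))) = - det (N_mat q n m g)"
    unfolding g_def n by (subst det_N_mat_sum) (simp_all add: sum_negf)
  finally have "f * det (L_mat q n) = det A + det (N_mat q n m g)"
    by simp
  moreover have "vars_mp g \<subseteq> vars_mp h \<union> {..<n - 1}"
    unfolding g_def using D(1) n
    by (intro vars_mp_sum_subset order.trans[OF vars_mp_mult] Un_least vars_mp_power_subset) force+
  ultimately show ?thesis
    by blast
qed

section \<open>Specialising a variable to one\<close>

definition one_at :: "nat \<Rightarrow> nat \<Rightarrow> 'a::comm_semiring_1 mpol" where
  "one_at k v = (if v < k then Var v else if v = k then 1 else Var (v - 1))"

lemma subst_one_at_hat_mp: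
  assumes "j \<le> k"
  shows "subst_mp (one_at (Suc k)) (hat_mp j f) = hat_mp j (subst_mp (one_at k) f)"
  unfolding hat_mp_def subst_mp_subst_mp
  by (intro arg_cong[where f = "\<lambda>s. subst_mp s f"] ext) (use assms in \<open>auto simp: one_at_def\<close>)

lemma subst_one_at_hat_mp_self: "subst_mp (one_at k) (hat_mp k f) = f"
proof -
  have "(\<lambda>v. one_at k (if v < k then v else Suc v)) = Var"
    by (auto simp: one_at_def)
  then show ?thesis
    unfolding hat_mp_def subst_mp_subst_mp subst_mp_Var by (metis subst_mp_Var_id)
qed

lemma vars_mp_subst_one_at:
  assumes "vars_mp f \<subseteq> {..<r}" "k < r"
  shows "vars_mp (subst_mp (one_at k) f) \<subseteq> {..<r - 1}"
proof -
  have "vars_mp (one_at k v :: 'a mpol) \<subseteq> {..<r - 1}" if "v < r" for v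
    using that assms(2) by (auto simp: one_at_def)
  with assms(1) have "(\<Union>v\<in>vars_mp f. vars_mp (one_at k v :: 'a mpol)) \<subseteq> {..<r - 1}"
    by blast
  then show ?thesis
    by (rule order.trans[OF vars_mp_subst_mp])
qed

theorem mainTheorem15:
  fixes f :: "'a::{field,finite} mpol" and m n r :: nat
  defines "q \<equiv> card (UNIV :: 'a set)"
  assumes "n \<ge> 1" and "r \<ge> n"
    and "vars_mp f \<subseteq> {..<r}"
    and "det (N_mat q (n + 1) m f) = 0"
  shows "\<exists>g :: 'a mpol. vars_mp g \<subseteq> {..<r - 1} \<and>
           f * det (L_mat q n) = det (N_mat q n m g)"
proof -
  let ?A = "map_mat (subst_mp (one_at n)) (N_mat q (Suc n) m f)"
  let ?h = "subst_mp (one_at (n - 1)) f"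
  interpret comm_ring_hom "subst_mp (one_at n) :: 'a mpol \<Rightarrow> 'a mpol"
    by (rule comm_ring_hom_subst_mp)
  have "det ?A = 0"
    using assms(5) by simp
  moreover have "\<exists>g. vars_mp g \<subseteq> vars_mp ?h \<union> {..<n - 1} \<and>
      f * det (L_mat q n) = det ?A + det (N_mat q n m g)"
  proof (rule det_bordered_moore[where 'a = 'a, folded q_def])
    show "?A \<in> carrier_mat (Suc n) (Suc n)" "0 < n"
      using assms(2) by (auto simp: N_mat_def)
    show "?A $$ (t, j) = Var j ^ q ^ t" "?A $$ (t, n) = 1" if "t < n" "j < n" for t j
      using that by (simp_all add: N_mat_def hom_power one_at_def)
    show "?A $$ (n, j) = Var j ^ q ^ m * hat_mp j ?h" if "j < n" for j
      using that subst_one_at_hat_mp[of j "n - 1" f]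
      by (simp add: N_mat_def hom_power hom_mult one_at_def)
    show "?A $$ (n, n) = f"
      by (simp add: N_mat_def hom_power hom_mult one_at_def subst_one_at_hat_mp_self)
  qed
  moreover have "vars_mp ?h \<subseteq> {..<r - 1}"
    using assms by (intro vars_mp_subst_one_at) auto
  ultimately show ?thesis
    using \<open>r \<ge> n\<close> by fastforce
qed

end
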